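(* Assume $K_2=1$ in (A2), $r_k\ge4/7$ for all $k\ge2$, $\kappa\ge\|f'\|_{C[-\beta,\beta]}$, $\|\phi^0\|_\infty\le\beta$, and $$\tau_1\le\min\Big\{\Big(\frac{4}{11\varsigma m(\kappa+4\varepsilon^2/h^2)\Gamma(2-\alpha)}\Big)^{1/\alpha},\Big(\frac{4}{11\kappa(1-\varsigma)m\Gamma(2-\alpha)}\Big)^{1/\alpha}\Big\}.$$ If moreover for all $n\ge1$ $$\tau_n\le\Big(\frac{4}{11(1-\varsigma)m(4\varepsilon^2/h^2+\kappa)\Gamma(2-\alpha)}\Big)^{1/\alpha},$$ then the solution of the unbalanced $L2$-$1_\sigma$-sESAV scheme satisfies $\|\phi^n\|_\infty\le\beta$ for all $n\ge1$.
   Context: Setting: $\Omega=(0,L)^2$ with periodic boundary conditions; constants $m>0$, $\varepsilon>0$, $\alpha\in(0,1)$, and $\varsigma:=\alpha/2$. The nonlinearity $f=-F'$ is one of: (double-well) $F(\phi)=\frac14(1-\phi^2)^2$, $f(\phi)=\phi-\phi^3$, with $\beta=1$; or (Flory–Huggins) $F(\phi)=\frac{\theta}{2}[(1+\phi)\ln(1+\phi)+(1-\phi)\ln(1-\phi)]-\frac{\theta_c}{2}\phi^2$, $f(\phi)=\frac{\theta}{2}\ln\frac{1-\phi}{1+\phi}+\theta_c\phi$ on $(-1,1)$, with $\theta_c>\theta>0$ and $\beta\in(0,1)$ the positive root of $f$. In both cases $f(\pm\beta)=0$. Spatial discretization: $M\in\mathbb N$, $h=L/M$; $\mathbb V_h$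 is the space of real grid functions $v=\{v_{ij}\}_{i,j\in\mathbb Z}$ that are $M$-periodic in each index; $\langle v,w\rangle=h^2\sum_{i,j=1}^Mv_{ij}w_{ij}$, $\|v\|_\infty=\max_{1\le i,j\le M}|v_{ij}|$; $\Delta_hv_{ij}=h^{-2}(v_{i+1,j}+v_{i-1,j}+v_{i,j+1}+v_{i,j-1}-4v_{ij})$. Scalar functions act on grid functions pointwise. $E_{1h}[v]=\langle F(v),1\rangle$ and $g_h(v,w)=\exp(w)/\exp(E_{1h}[v])$ for $v\in\mathbb V_h$ (with $\|v\|_\infty<1$ in the Flory–Huggins case) and $w\in\mathbb R$. Auxiliary functional: $V:\mathbb R\to\mathbb R$ satisfies (A1) $V\in C^1(\mathbb R)\cap W^{2,\infty}(\mathbb R)$, $V(1)=1$, $V'(1)=0$, $|V'|\le K_1$; (A2) $0\le V\le K_2$ for a constant $K_2>0$; (A3) $|z_1-1|\le|z_2-1|$ implies $|V(z_1)-1|\le|V(z_2)-1|$. Time grid: $0=t_0<t_1<\dots<t_N=T$, $\tau_k=t_k-t_{k-1}$, $r_k=\tau_k/\tau_{k-1}$ ($k\ge2$), $\nabla_\tau v^k=v^k-v^{k-1}$, $\mathbb D_\tau v^k=\nabla_\tau v^k/\tau_k$, $\omega_\mu(t)=t^{\mu-1}/\Gamma(\mu)$. Constant $\kappa\ge0$; data $\phi^0\in\mathbb V_h$, $R^0\in\mathbb R$. For $n\ge2$ the predicted solution is $\hat\phi^n=\min\{\max\{(1+r_n)\phi^{n-1}-r_n\phi^{n-2},-\beta\},\beta\}$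 (pointwise). $L2$-$1_\sigma$ discretization: $t_{k-\varsigma}=(1-\varsigma)t_k+\varsigma t_{k-1}$, $t_{k-1/2}=(t_k+t_{k-1})/2$; $a^{(n)}_{n-k}=\frac1{\tau_k}\int_{t_{k-1}}^{\min\{t_k,t_{n-\varsigma}\}}\omega_{1-\alpha}(t_{n-\varsigma}-s)\,ds$ ($1\le k\le n$), $b^{(n)}_{n-k}=\frac{2}{\tau_k(\tau_k+\tau_{k+1})}\int_{t_{k-1}}^{t_k}(s-t_{k-1/2})\omega_{1-\alpha}(t_{n-\varsigma}-s)\,ds$ ($1\le k\le n-1$); $B^{(1)}_0=a^{(1)}_0$, and for $n\ge2$: $B^{(n)}_0=a^{(n)}_0+b^{(n)}_1/r_n$, $B^{(n)}_{n-k}=a^{(n)}_{n-k}+b^{(n)}_{n-k+1}/r_k-b^{(n)}_{n-k}$ for $2\le k\le n-1$, $B^{(n)}_{n-1}=a^{(n)}_{n-1}-b^{(n)}_{n-1}$; $\tilde{\mathbb D}^\alpha_\tau v^n=\sum_{k=1}^nB^{(n)}_{n-k}\nabla_\tau v^k$; $w^{k-\varsigma}=(1-\varsigma)w^k+\varsigma w^{k-1}$. Unbalanced $L2$-$1_\sigma$-sESAV scheme: $\hat\phi^1\in\mathbb V_h$ with $\|\hat\phi^1\|_\infty\le\beta$ solves $B^{(1)}_0(\hat\phi^1-\phi^0)=m(\varepsilon^2\Delta_h\hat\phi^{1-\varsigma}+f(\hat\phi^{1-\varsigma}))$; for $n\ge2$, $\hat\phi^n$ is the predicted solution above. For $n\ge1$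 set $\hat\phi^{n-\varsigma}=(1-\varsigma)\hat\phi^n+\varsigma\phi^{n-1}$ and $V^{n-\varsigma}=V(g_h(\hat\phi^{n-\varsigma},R^{n-1}))$, and define $(\phi^n,R^n)$ by $\tilde{\mathbb D}^\alpha_\tau\phi^n=m(\varepsilon^2\Delta_h\phi^{n-\varsigma}+V^{n-\varsigma}f(\hat\phi^{n-\varsigma})-\kappa(\phi^{n-\varsigma}-V^{n-\varsigma}\hat\phi^{n-\varsigma}))$ and $\mathbb D_\tau R^n=-V^{n-\varsigma}\langle f(\hat\phi^{n-\varsigma}),\mathbb D_\tau\phi^n\rangle+\kappa\langle\phi^{n-\varsigma}-V^{n-\varsigma}\hat\phi^{n-\varsigma},\mathbb D_\tau\phi^n\rangle$. *)

theory Defs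
  imports "HOL-Analysis.Analysis"
begin

text \<open>Grid functions v = {v_ij}, i,j integers; V_h = the M-periodic ones.\<close>
type_synonym grid = "int \<Rightarrow> int \<Rightarrow> real"

definition periodic_grid :: "nat \<Rightarrow> grid \<Rightarrow> bool" where
  "periodic_grid M v \<longleftrightarrow> (\<forall>i j. v (i + int M) j = v i j \<and> v i (j + int M) = v i j)"

definition ginner :: "real \<Rightarrow> nat \<Rightarrow> grid \<Rightarrow> grid \<Rightarrow> real" where
  "ginner h M v w = h^2 * (\<Sum>i\<in>{1..int M}. \<Sum>j\<in>{1..int M}. v i j * w i j)"

definition gnorm_inf :: "nat \<Rightarrow> grid \<Rightarrow> real" where
  "gnorm_inf M v = Max {\<bar>v i j\<bar> | i j. i \<in> {1..int M} \<and> j \<in> {1..int M}}"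

definition lap_h :: "real \<Rightarrow> grid \<Rightarrow> grid" where
  "lap_h h v = (\<lambda>i j. (v (i+1) j + v (i-1) j + v i (j+1) + v i (j-1) - 4 * v i j) / h^2)"

definition gmap :: "(real \<Rightarrow> real) \<Rightarrow> grid \<Rightarrow> grid" where
  "gmap g v = (\<lambda>i j. g (v i j))"

definition E1h :: "real \<Rightarrow> nat \<Rightarrow> (real \<Rightarrow> real) \<Rightarrow> grid \<Rightarrow> real" where
  "E1h h M F v = ginner h M (gmap F v) (\<lambda>_ _. 1)"

definition g_h :: "real \<Rightarrow> nat \<Rightarrow> (real \<Rightarrow> real) \<Rightarrow> grid \<Rightarrow> real \<Rightarrow> real" where
  "g_h h M F v w = exp w / exp (E1h h M F v)"

definition double_well :: "(real \<Rightarrow> real) \<Rightarrow> (real \<Rightarrow> real) \<Rightarrow> real \<Rightarrow> bool" where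
  "double_well F f \<beta> \<longleftrightarrow>
     F = (\<lambda>x. (1 - x^2)^2 / 4) \<and> f = (\<lambda>x. x - x^3) \<and> \<beta> = 1"

definition flory_huggins :: "(real \<Rightarrow> real) \<Rightarrow> (real \<Rightarrow> real) \<Rightarrow> real \<Rightarrow> bool" where
  "flory_huggins F f \<beta> \<longleftrightarrow>
     (\<exists>\<theta> \<theta>c. 0 < \<theta> \<and> \<theta> < \<theta>c \<and>
        F = (\<lambda>x. \<theta>/2 * ((1+x) * ln (1+x) + (1-x) * ln (1-x)) - \<theta>c/2 * x^2) \<and>
        f = (\<lambda>x. \<theta>/2 * ln ((1-x)/(1+x)) + \<theta>c * x) \<and>
        0 < \<beta> \<and> \<beta> < 1 \<and> f \<beta> = 0)"

text \<open>Membership of a C^1 function in W^{2,infinity}(R): V, V' bounded and V' Lipschitz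
  (i.e. V'' exists weakly and is essentially bounded).\<close>
definition W2inf :: "(real \<Rightarrow> real) \<Rightarrow> bool" where
  "W2inf V \<longleftrightarrow> bounded (range V) \<and> bounded (range (deriv V)) \<and>
     (\<exists>C. C-lipschitz_on UNIV (deriv V))"

definition assumption_A1 :: "(real \<Rightarrow> real) \<Rightarrow> real \<Rightarrow> bool" where
  "assumption_A1 V K1 \<longleftrightarrow> (\<forall>x. V differentiable at x) \<and> continuous_on UNIV (deriv V) \<and>
     W2inf V \<and> V 1 = 1 \<and> deriv V 1 = 0 \<and> (\<forall>x. \<bar>deriv V x\<bar> \<le> K1)"

definition assumption_A2 :: "(real \<Rightarrow> real) \<Rightarrow> real \<Rightarrow> bool" where
  "assumption_A2 V K2 \<longleftrightarrow> K2 > 0 \<and> (\<forall>x. 0 \<le> V x \<and> V x \<le> K2)"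

definition assumption_A3 :: "(real \<Rightarrow> real) \<Rightarrow> bool" where
  "assumption_A3 V \<longleftrightarrow> (\<forall>z1 z2. \<bar>z1 - 1\<bar> \<le> \<bar>z2 - 1\<bar> \<longrightarrow> \<bar>V z1 - 1\<bar> \<le> \<bar>V z2 - 1\<bar>)"

definition tau :: "(nat \<Rightarrow> real) \<Rightarrow> nat \<Rightarrow> real" where
  "tau t k = t k - t (k - 1)"

definition rr :: "(nat \<Rightarrow> real) \<Rightarrow> nat \<Rightarrow> real" where
  "rr t k = tau t k / tau t (k - 1)"

definition omega :: "real \<Rightarrow> real \<Rightarrow> real" where
  "omega \<mu> s = s powr (\<mu> - 1) / Gamma \<mu>"

definition tsig :: "real \<Rightarrow> (nat \<Rightarrow> real) \<Rightarrow> nat \<Rightarrow> real" where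
  "tsig \<sigma> t k = (1 - \<sigma>) * t k + \<sigma> * t (k - 1)"

text \<open>a_coef alpha t n k = a^{(n)}_{n-k}  (1 <= k <= n), with sigma = alpha/2.\<close>
definition a_coef :: "real \<Rightarrow> (nat \<Rightarrow> real) \<Rightarrow> nat \<Rightarrow> nat \<Rightarrow> real" where
  "a_coef \<alpha> t n k = (1 / tau t k) *
     integral {t (k - 1) .. min (t k) (tsig (\<alpha>/2) t n)}
       (\<lambda>s. omega (1 - \<alpha>) (tsig (\<alpha>/2) t n - s))"

text \<open>b_coef alpha t n k = b^{(n)}_{n-k}  (1 <= k <= n-1).\<close>
definition b_coef :: "real \<Rightarrow> (nat \<Rightarrow> real) \<Rightarrow> nat \<Rightarrow> nat \<Rightarrow> real" where
  "b_coef \<alpha> t n k = 2 / (tau t k * (tau t k + tau t (k + 1))) *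
     integral {t (k - 1) .. t k}
       (\<lambda>s. (s - (t k + t (k - 1)) / 2) * omega (1 - \<alpha>) (tsig (\<alpha>/2) t n - s))"

text \<open>B_coef alpha t n k = B^{(n)}_{n-k}  (1 <= k <= n).\<close>
definition B_coef :: "real \<Rightarrow> (nat \<Rightarrow> real) \<Rightarrow> nat \<Rightarrow> nat \<Rightarrow> real" where
  "B_coef \<alpha> t n k =
     (if n = 1 then a_coef \<alpha> t 1 1
      else if k = n then a_coef \<alpha> t n n + b_coef \<alpha> t n (n - 1) / rr t n
      else if k = 1 then a_coef \<alpha> t n 1 - b_coef \<alpha> t n 1
      else a_coef \<alpha> t n k + b_coef \<alpha> t n (k - 1) / rr t k - b_coef \<alpha> t n k)"

definition caputo_L21s :: "real \<Rightarrow> (nat \<Rightarrow> real) \<Rightarrow> (nat \<Rightarrow> grid) \<Rightarrow> nat \<Rightarrow> grid" where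
  "caputo_L21s \<alpha> t v n = (\<lambda>i j. \<Sum>k = 1..n. B_coef \<alpha> t n k * (v k i j - v (k - 1) i j))"

definition gsig :: "real \<Rightarrow> grid \<Rightarrow> grid \<Rightarrow> grid" where
  "gsig \<sigma> w w' = (\<lambda>i j. (1 - \<sigma>) * w i j + \<sigma> * w' i j)"

definition sESAV_solution ::
  "real \<Rightarrow> nat \<Rightarrow> real \<Rightarrow> real \<Rightarrow> real \<Rightarrow> real \<Rightarrow> (real \<Rightarrow> real) \<Rightarrow> (real \<Rightarrow> real)
   \<Rightarrow> real \<Rightarrow> (real \<Rightarrow> real) \<Rightarrow> (nat \<Rightarrow> real) \<Rightarrow> nat
   \<Rightarrow> (nat \<Rightarrow> grid) \<Rightarrow> (nat \<Rightarrow> real) \<Rightarrow> (nat \<Rightarrow> grid) \<Rightarrow> bool" where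
  "sESAV_solution L M m \<epsilon> \<alpha> \<kappa> F f \<beta> V t N \<phi> R \<phi>hat \<longleftrightarrow>
    (let h = L / real M; \<sigma> = \<alpha> / 2 in
     periodic_grid M (\<phi> 0) \<and>
     (\<forall>n\<in>{1..N}. periodic_grid M (\<phi> n)) \<and>
     \<comment> \<open>first step: predicted solution by the nonlinear L1-type step\<close>
     (1 \<le> N \<longrightarrow>
        periodic_grid M (\<phi>hat 1) \<and> gnorm_inf M (\<phi>hat 1) \<le> \<beta> \<and>
        (\<forall>i j. B_coef \<alpha> t 1 1 * (\<phi>hat 1 i j - \<phi> 0 i j) =
           m * (\<epsilon>^2 * lap_h h (gsig \<sigma> (\<phi>hat 1) (\<phi> 0)) i j
                + f (gsig \<sigma> (\<phi>hat 1) (\<phi> 0) i j)))) \<and>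
     \<comment> \<open>predicted solution for n >= 2\<close>
     (\<forall>n\<in>{2..N}. \<forall>i j. \<phi>hat n i j =
        min (max ((1 + rr t n) * \<phi> (n - 1) i j - rr t n * \<phi> (n - 2) i j) (- \<beta>)) \<beta>) \<and>
     \<comment> \<open>corrected solution and auxiliary variable\<close>
     (\<forall>n\<in>{1..N}.
        let \<phi>h = gsig \<sigma> (\<phi>hat n) (\<phi> (n - 1));
            \<phi>s = gsig \<sigma> (\<phi> n) (\<phi> (n - 1));
            Vn = V (g_h h M F \<phi>h (R (n - 1)));
            D\<phi> = (\<lambda>i j. (\<phi> n i j - \<phi> (n - 1) i j) / tau t n)
        in (\<forall>i j. caputo_L21s \<alpha> t \<phi> n i j =
               m * (\<epsilon>^2 * lap_h h \<phi>s i j + Vn * f (\<phi>h i j)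
                    - \<kappa> * (\<phi>s i j - Vn * \<phi>h i j))) \<and>
           (R n - R (n - 1)) / tau t n =
               - Vn * ginner h M (gmap f \<phi>h) D\<phi>
               + \<kappa> * ginner h M (\<lambda>i j. \<phi>s i j - Vn * \<phi>h i j) D\<phi>))"

end

(*
  Write w(s) = omega_{1-alpha}(t_{n-sigma} - s); this kernel is increasing and convex below
  t_{n-sigma}, and the L2-1sigma coefficients a^{(n)}, b^{(n)} are its zeroth and first moments on
  the cells.  Monotonicity and convexity give B_k <= w(t_k) <= B_{k+1} for the interior indices
  (the ratio condition r_k >= 4/7 is what lets convexity absorb the correction b_{k-1}/r_k), so
  the weights are nonnegative and nondecreasing in k.  The last gap B_n - B_{n-1} is at least
  a_n - w(t_{n-1}) = sigma ((1-sigma) tau_n)^(-alpha) / Gamma(2-alpha), which the step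
  restriction makes at least m sigma (4 eps^2/h^2 + kappa).

  Now look at a grid point where |phi^n| is maximal.  Abel summation bounds the history part of
  the discrete Caputo derivative by B_{n-1} beta, the neighbours in the discrete Laplacian are
  bounded by the maximum, and since kappa >= |f'| and f(-beta) = f(beta) = 0, the stabilised
  nonlinearity f y + kappa y lies in [-kappa beta, kappa beta].  Collecting the phi^n terms
  leaves phi^n times a positive factor against a combination with nonnegative coefficients, and
  the gap condition makes it yield |phi^n| <= beta.
*)

theory Submission
  imports Defs
begin

section \<open>The kernel\<close>

lemma omega_one_minus: "omega (1 - \<alpha>) x = x powr (- \<alpha>) / Gamma (1 - \<alpha>)"
  by (simp add: omega_def)

lemma Gamma_two_minus:
  fixes \<alpha> :: real
  assumes "0 < \<alpha>" "\<alpha> < 1"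
  shows "Gamma (2 - \<alpha>) = (1 - \<alpha>) * Gamma (1 - \<alpha>)"
proof -
  have "1 - \<alpha> \<notin> \<int>\<^sub>\<le>\<^sub>0" using assms by (auto elim!: nonpos_Ints_cases)
  from Gamma_plus1[OF this] show ?thesis by (simp add: algebra_simps)
qed

lemma Gamma_one_minus_pos: "(\<alpha>::real) < 1 \<Longrightarrow> 0 < Gamma (1 - \<alpha>)"
  by (simp add: Gamma_real_pos)

lemma omega_reflected_has_derivative:
  fixes \<alpha> T s :: real
  assumes "s < T" "0 < \<alpha>" "\<alpha> < 1"
  shows "((\<lambda>s. omega (1 - \<alpha>) (T - s)) has_real_derivative
           \<alpha> * (T - s) powr (- \<alpha> - 1) / Gamma (1 - \<alpha>)) (at s)"
proof -
  have "Gamma (1 - \<alpha>) \<noteq> 0" using Gamma_one_minus_pos[OF assms(3)] by simp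
  then have "((\<lambda>s. (T - s) powr (- \<alpha>) / Gamma (1 - \<alpha>)) has_real_derivative
        - \<alpha> * (T - s) powr (- \<alpha> - 1) * (-1) / Gamma (1 - \<alpha>)) (at s)"
    using assms by (auto intro!: derivative_eq_intros)
  then show ?thesis by (simp add: omega_one_minus)
qed

lemma omega_reflected_mono:
  fixes \<alpha> T x y :: real
  assumes "x \<le> y" "y < T" "0 < \<alpha>" "\<alpha> < 1"
  shows "omega (1 - \<alpha>) (T - x) \<le> omega (1 - \<alpha>) (T - y)"
proof -
  have "(T - x) powr (- \<alpha>) \<le> (T - y) powr (- \<alpha>)"
    by (rule powr_mono2') (use assms in auto)
  then show ?thesis using assms by (simp add: omega_one_minus divide_right_mono)
qed

lemma omega_reflected_nonneg: "(\<alpha>::real) < 1 \<Longrightarrow> 0 \<le> omega (1 - \<alpha>) x"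
  by (simp add: omega_def)

lemma continuous_on_omega_reflected:
  fixes \<alpha> T :: real
  assumes "S \<subseteq> {..<T}" "0 < \<alpha>" "\<alpha> < 1"
  shows "continuous_on S (\<lambda>s. omega (1 - \<alpha>) (T - s))"
proof -
  have "Gamma (1 - \<alpha>) \<noteq> 0" using Gamma_one_minus_pos[OF assms(3)] by simp
  then show ?thesis using assms by (auto simp: omega_one_minus intro!: continuous_intros)
qed

lemma convex_on_omega_reflected:
  fixes \<alpha> T :: real
  assumes "0 < \<alpha>" "\<alpha> < 1"
  shows "convex_on {..<T} (\<lambda>s. omega (1 - \<alpha>) (T - s))"
proof (rule convex_on_realI)
  fix x y :: real
  assume "x \<in> {..<T}" "y \<in> {..<T}" "x \<le> y"
  then have "(T - x) powr (- \<alpha> - 1) \<le> (T - y) powr (- \<alpha> - 1)"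
    using assms by (intro powr_mono2') auto
  then show "\<alpha> * (T - x) powr (- \<alpha> - 1) / Gamma (1 - \<alpha>) \<le> \<alpha> * (T - y) powr (- \<alpha> - 1) / Gamma (1 - \<alpha>)"
    using assms by (intro divide_right_mono mult_left_mono) auto
qed (use assms omega_reflected_has_derivative in auto)

lemma convex_on_chord_slope_mono:
  fixes f :: "real \<Rightarrow> real"
  assumes f: "convex_on I f" and I: "a \<in> I" "d \<in> I" and abcd: "a < b" "b \<le> c" "c < d"
  shows "(f b - f a) / (b - a) \<le> (f d - f c) / (d - c)"
proof -
  have "connected I" using f convex_connected convex_on_imp_convex by blast
  then have bc: "b \<in> I" "c \<in> I" using I abcd connected_contains_Icc by fastforce+
  have "(f a - f b) / (a - b) \<le> (f b - f d) / (b - d)"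
    using convex_on_slope_le[OF f I abcd(1)] abcd by linarith
  also have "\<dots> \<le> (f c - f d) / (c - d)"
    using convex_on_slope_le(2)[OF f bc(1) I(2), of c] abcd by (cases "b = c") auto
  finally show ?thesis by (metis minus_diff_eq minus_divide_divide)
qed

lemma has_integral_omega_reflected:
  fixes \<alpha> a T :: real
  assumes "a \<le> T" "0 < \<alpha>" "\<alpha> < 1"
  shows "((\<lambda>s. omega (1 - \<alpha>) (T - s)) has_integral omega (2 - \<alpha>) (T - a)) {a..T}"
proof -
  define F where "F s = - omega (2 - \<alpha>) (T - s)" for s
  have G: "Gamma (2 - \<alpha>) = (1 - \<alpha>) * Gamma (1 - \<alpha>)" "Gamma (1 - \<alpha>) \<noteq> 0"
    using Gamma_two_minus[OF assms(2,3)] Gamma_one_minus_pos[OF assms(3)] by simp_all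
  have "((\<lambda>s. omega (1 - \<alpha>) (T - s)) has_integral F T - F a) {a..T}"
  proof (rule fundamental_theorem_of_calculus_interior[OF assms(1)])
    show "continuous_on {a..T} F"
      using assms G by (auto simp: F_def omega_def intro!: continuous_intros continuous_on_powr')
    fix x assume "x \<in> {a<..<T}"
    then have "(F has_real_derivative (1 - \<alpha>) * (T - x) powr (- \<alpha>) / Gamma (2 - \<alpha>)) (at x)"
      using assms G unfolding F_def omega_def by (auto intro!: derivative_eq_intros)
    moreover have "(1 - \<alpha>) * (T - x) powr (- \<alpha>) / Gamma (2 - \<alpha>) = omega (1 - \<alpha>) (T - x)"
      using assms G by (simp add: omega_one_minus)
    ultimately show "(F has_vector_derivative omega (1 - \<alpha>) (T - x)) (at x)"
      using has_real_derivative_iff_has_vector_derivative by metis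
  qed
  then show ?thesis using assms by (simp add: F_def omega_def)
qed

section \<open>Moments of an increasing function on a cell\<close>

lemma has_integral_shifted_linear:
  fixes a b c K :: real
  assumes "a \<le> b"
  shows "((\<lambda>s. (s - c) * K) has_integral ((b - c)^2 / 2 - (a - c)^2 / 2) * K) {a..b}"
proof -
  have "((\<lambda>s. (s - c) * K) has_integral (b - c)^2 / 2 * K - (a - c)^2 / 2 * K) {a..b}"
  proof (rule fundamental_theorem_of_calculus[OF assms])
    fix x assume "x \<in> {a..b}"
    have "((\<lambda>s. (s - c)^2 / 2 * K) has_real_derivative (x - c) * K) (at x within {a..b})"
      by (auto intro!: derivative_eq_intros simp: field_simps)
    then show "((\<lambda>s. (s - c)^2 / 2 * K) has_vector_derivative (x - c) * K) (at x within {a..b})"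
      using has_real_derivative_iff_has_vector_derivative by blast
  qed
  then show ?thesis by (simp add: algebra_simps)
qed

lemma has_integral_midpoint_centered:
  fixes a b K :: real
  assumes "a \<le> b"
  shows "((\<lambda>s. (s - (b + a) / 2) * K) has_integral 0) {a..b}"
proof -
  have "(b - (b + a) / 2)^2 / 2 - (a - (b + a) / 2)^2 / 2 = 0"
    by (simp add: power2_eq_square algebra_simps)
  then show ?thesis using has_integral_shifted_linear[OF assms, of "(b + a) / 2" K] by simp
qed

definition moment0 :: "(real \<Rightarrow> real) \<Rightarrow> real \<Rightarrow> real \<Rightarrow> real" where
  "moment0 w a b = integral {a..b} w"

definition moment1 :: "(real \<Rightarrow> real) \<Rightarrow> real \<Rightarrow> real \<Rightarrow> real" where
  "moment1 w a b = integral {a..b} (\<lambda>s. (s - (b + a) / 2) * w s)"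

locale increasing_cell =
  fixes w :: "real \<Rightarrow> real" and a b :: real
  assumes less: "a < b"
    and cont: "continuous_on {a..b} w"
    and mono: "\<And>x y. a \<le> x \<Longrightarrow> x \<le> y \<Longrightarrow> y \<le> b \<Longrightarrow> w x \<le> w y"
begin

lemma continuous_on_first_moment:
  "{x..y} \<subseteq> {a..b} \<Longrightarrow> continuous_on {x..y} (\<lambda>s. (s - (b + a) / 2) * w s)"
  by (intro continuous_intros continuous_on_subset[OF cont])

lemma has_integral_moment0: "(w has_integral moment0 w a b) {a..b}"
  unfolding moment0_def using integrable_continuous_interval[OF cont] by (simp add: integrable_integral)

lemma has_integral_moment1: "((\<lambda>s. (s - (b + a) / 2) * w s) has_integral moment1 w a b) {a..b}"
  unfolding moment1_def using integrable_continuous_interval[OF continuous_on_first_moment]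
  by (simp add: integrable_integral)

lemma moment1_nonneg: "0 \<le> moment1 w a b"
proof (rule has_integral_le[OF has_integral_midpoint_centered has_integral_moment1])
  show "a \<le> b" using less by simp
  fix s assume s: "s \<in> {a..b}"
  let ?m = "(b + a) / 2"
  have "0 \<le> (s - ?m) * (w s - w ?m)"
  proof (cases "s \<le> ?m")
    case True
    then have "w s \<le> w ?m" using s less by (intro mono) auto
    then show ?thesis using True by (intro mult_nonpos_nonpos) auto
  next
    case False
    then have "w ?m \<le> w s" using s less by (intro mono) auto
    then show ?thesis using False by auto
  qed
  then show "(s - ?m) * w ?m \<le> (s - ?m) * w s" by (simp add: algebra_simps)
qed

lemma moment1_le_excess: "moment1 w a b \<le> (b - a) / 2 * (moment0 w a b - (b - a) * w a)"
proof -
  let ?m = "(b + a) / 2"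
  have "((\<lambda>s. w s - w a) has_integral (moment0 w a b - (b - a) * w a)) {a..b}"
    using has_integral_diff[OF has_integral_moment0 has_integral_const_real[of "w a" a b]] less by simp
  then have "((\<lambda>s. (s - ?m) * w a + (b - a) / 2 * (w s - w a))
      has_integral (0 + (b - a) / 2 * (moment0 w a b - (b - a) * w a))) {a..b}"
    using less by (intro has_integral_add has_integral_midpoint_centered has_integral_mult_right) auto
  then have "moment1 w a b \<le> 0 + (b - a) / 2 * (moment0 w a b - (b - a) * w a)"
  proof (rule has_integral_le[OF has_integral_moment1])
    fix s assume s: "s \<in> {a..b}"
    then have "(s - ?m - (b - a) / 2) * (w s - w a) \<le> 0"
      by (intro mult_nonpos_nonneg) (auto intro: mono simp: field_simps)
    moreover have "(s - ?m - (b - a) / 2) * (w s - w a)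
        = (s - ?m) * w s - ((s - ?m) * w a + (b - a) / 2 * (w s - w a))"
      by (simp add: field_simps)
    ultimately show "(s - ?m) * w s \<le> (s - ?m) * w a + (b - a) / 2 * (w s - w a)"
      by linarith
  qed
  then show ?thesis by simp
qed

lemma moment1_le_increment: "moment1 w a b \<le> (b - a)^2 * (w b - w a) / 8"
proof -
  let ?m = "(b + a) / 2"
  let ?g = "\<lambda>s. (s - ?m) * w s"
  have am: "a \<le> ?m" "?m \<le> b" using less by auto
  have "?g integrable_on {a..?m}" "?g integrable_on {?m..b}"
    using am by (auto intro!: integrable_continuous_interval continuous_on_first_moment)
  then obtain J1 J2 where J1: "(?g has_integral J1) {a..?m}" and J2: "(?g has_integral J2) {?m..b}"
    by blast
  have "moment1 w a b = J1 + J2"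
    using has_integral_unique[OF has_integral_moment1 has_integral_combine[OF am J1 J2]] .
  moreover have "J1 \<le> ((?m - ?m)^2 / 2 - (a - ?m)^2 / 2) * w a"
  proof (rule has_integral_le[OF J1 has_integral_shifted_linear[OF am(1)]])
    fix s assume "s \<in> {a..?m}"
    then show "(s - ?m) * w s \<le> (s - ?m) * w a" using am by (intro mult_left_mono_neg mono) auto
  qed
  moreover have "J2 \<le> ((b - ?m)^2 / 2 - (?m - ?m)^2 / 2) * w b"
  proof (rule has_integral_le[OF J2 has_integral_shifted_linear[OF am(2)]])
    fix s assume "s \<in> {?m..b}"
    then show "(s - ?m) * w s \<le> (s - ?m) * w b" using am by (intro mult_left_mono mono) auto
  qed
  ultimately show ?thesis by (simp add: power2_eq_square field_simps)
qed

lemma moment0_le_of_slope: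
  assumes "\<And>s. a \<le> s \<Longrightarrow> s \<le> b \<Longrightarrow> d * (b - s) \<le> w b - w s"
  shows "moment0 w a b \<le> (b - a) * w b - d * (b - a)^2 / 2"
proof -
  have "((\<lambda>s. w b) has_integral (b - a) * w b) {a..b}"
    using has_integral_const_real[of "w b" a b] less by simp
  then have "((\<lambda>s. (s - b) * d + w b) has_integral ((b - b)^2 / 2 - (a - b)^2 / 2) * d + (b - a) * w b) {a..b}"
    using less by (intro has_integral_add has_integral_shifted_linear) auto
  then have "moment0 w a b \<le> ((b - b)^2 / 2 - (a - b)^2 / 2) * d + (b - a) * w b"
    by (rule has_integral_le[OF has_integral_moment0]) (use assms in \<open>auto simp: algebra_simps\<close>)
  then show ?thesis by (simp add: power2_eq_square field_simps)
qed

end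

section \<open>A pointwise maximum principle\<close>

lemma abs_weighted_increments_le:
  fixes B x :: "nat \<Rightarrow> real"
  assumes "B 0 = 0" "\<And>k. k < j \<Longrightarrow> B k \<le> B (Suc k)" "\<And>k. k < j \<Longrightarrow> \<bar>x k\<bar> \<le> \<beta>"
  shows "\<bar>(\<Sum>k = 1..j. B k * (x k - x (k - 1))) - B j * x j\<bar> \<le> B j * \<beta>"
  using assms(2,3)
proof (induction j)
  case 0
  then show ?case using assms(1) by simp
next
  case (Suc j)
  define H where "H = (\<Sum>k = 1..j. B k * (x k - x (k - 1))) - B j * x j"
  define P where "P = (B (Suc j) - B j) * x j"
  have "\<bar>H\<bar> \<le> B j * \<beta>" unfolding H_def using Suc by simp
  moreover have "\<bar>P\<bar> \<le> B (Suc j) * \<beta> - B j * \<beta>"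
    using Suc.prems[of j] by (simp add: P_def abs_mult mult_left_mono left_diff_distrib[symmetric])
  moreover have "(\<Sum>k = 1..Suc j. B k * (x k - x (k - 1))) - B (Suc j) * x (Suc j) = H - P"
    by (simp add: H_def P_def algebra_simps)
  ultimately show ?case using abs_triangle_ineq4[of H P] by linarith
qed

lemma pointwise_max_principle:
  fixes Bn Bp H xn xp Nn Np g m l \<sigma> \<kappa> \<mu> \<beta> :: real
  assumes eq: "Bn * xn - (Bn - Bp) * xp + H =
      m * (l * ((1 - \<sigma>) * Nn + \<sigma> * Np - 4 * ((1 - \<sigma>) * xn + \<sigma> * xp)) + g - \<kappa> * ((1 - \<sigma>) * xn + \<sigma> * xp))"
    and gap: "m * \<sigma> * (4 * l + \<kappa>) \<le> Bn - Bp" and Bp: "0 \<le> Bp" and H: "\<bar>H\<bar> \<le> Bp * \<beta>"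
    and xn: "\<bar>xn\<bar> = \<mu>" and Nn: "\<bar>Nn\<bar> \<le> 4 * \<mu>" and Np: "\<bar>Np\<bar> \<le> 4 * \<beta>" and xp: "\<bar>xp\<bar> \<le> \<beta>"
    and g: "\<bar>g\<bar> \<le> \<kappa> * \<beta>"
    and pos: "0 < m" "0 < l" "0 \<le> \<kappa>" "0 < \<sigma>" "\<sigma> < 1"
  shows "\<mu> \<le> \<beta>"
proof -
  define c a b where "c = m * \<sigma> * (4 * l + \<kappa>)" and "a = m * l * (1 - \<sigma>)" and "b = m * l * \<sigma>"
  define K where "K = Bn + m * (1 - \<sigma>) * (4 * l + \<kappa>)"
  have coeffs: "0 \<le> a" "0 \<le> b" "0 \<le> Bn - Bp - c" using pos gap by (simp_all add: a_def b_def c_def)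
  have K: "0 < K" using gap Bp pos by (simp add: K_def c_def) (smt (verit) mult_pos_pos mult_nonneg_nonneg)
  have "K * xn = - H + (Bn - Bp - c) * xp + a * Nn + b * Np + m * g"
    using eq by (simp add: K_def a_def b_def c_def algebra_simps)
  then have "K * \<mu> \<le> Bp * \<beta> + (Bn - Bp - c) * \<beta> + a * (4 * \<mu>) + b * (4 * \<beta>) + m * (\<kappa> * \<beta>)"
    using xn K H coeffs pos abs_mult[of K xn] mult_left_mono[OF xp coeffs(3)] mult_left_mono[OF Nn coeffs(1)]
      mult_left_mono[OF Np coeffs(2)] mult_left_mono[OF g, of m] abs_mult[of "Bn - Bp - c" xp]
      abs_mult[of a Nn] abs_mult[of b Np] abs_mult[of m g]
    by (smt (verit))
  then have "(Bn + m * (1 - \<sigma>) * \<kappa>) * \<mu> \<le> (Bn + m * (1 - \<sigma>) * \<kappa>) * \<beta>"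
    by (simp add: K_def a_def b_def c_def algebra_simps)
  moreover have "0 < Bn + m * (1 - \<sigma>) * \<kappa>" using gap Bp pos coeffs K
    by (simp add: c_def) (smt (verit) mult_nonneg_nonneg mult_pos_pos)
  ultimately show ?thesis by simp
qed

lemma abs_convex_comb_le:
  fixes \<sigma> x y \<beta> :: real
  assumes "0 \<le> \<sigma>" "\<sigma> \<le> 1" "\<bar>x\<bar> \<le> \<beta>" "\<bar>y\<bar> \<le> \<beta>"
  shows "\<bar>(1 - \<sigma>) * x + \<sigma> * y\<bar> \<le> \<beta>"
proof -
  have "\<bar>(1 - \<sigma>) * x + \<sigma> * y\<bar> \<le> (1 - \<sigma>) * \<bar>x\<bar> + \<sigma> * \<bar>y\<bar>"
    using assms abs_triangle_ineq[of "(1 - \<sigma>) * x" "\<sigma> * y"] by (simp add: abs_mult)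
  also have "\<dots> \<le> (1 - \<sigma>) * \<beta> + \<sigma> * \<beta>"
    using assms by (intro add_mono mult_left_mono) auto
  finally show ?thesis by (simp add: algebra_simps)
qed

section \<open>Grid functions and the nonlinearity\<close>

lemma periodic_int_shift:
  fixes g :: "int \<Rightarrow> 'a" and c q x :: int
  assumes "\<And>x. g (x + c) = g x"
  shows "g (x + c * q) = g x"
proof (induction q rule: int_induct[where k = 0])
  case (step1 i)
  then show ?case using assms[of "x + c * i"] by (simp add: algebra_simps)
next
  case (step2 i)
  then show ?case using assms[of "x + c * (i - 1)"] by (simp add: algebra_simps)
qed simp

lemma periodic_grid_mod:
  assumes "periodic_grid M v"
  shows "v i j = v ((i - 1) mod int M + 1) ((j - 1) mod int M + 1)"
proof -
  have "v (((i - 1) mod int M + 1) + int M * ((i - 1) div int M)) j = v ((i - 1) mod int M + 1) j"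
    using assms by (intro periodic_int_shift[where g = "\<lambda>i. v i j"]) (simp add: periodic_grid_def)
  moreover have "v i' (((j - 1) mod int M + 1) + int M * ((j - 1) div int M)) = v i' ((j - 1) mod int M + 1)" for i'
    using assms by (intro periodic_int_shift[where g = "v i'"]) (simp add: periodic_grid_def)
  ultimately show ?thesis by (simp add: algebra_simps)
qed

lemma finite_grid_values: "finite {\<bar>v i j\<bar> | i j. i \<in> {1..int M} \<and> j \<in> {1..int M}}"
  by (rule finite_image_set2) auto

lemma abs_le_gnorm_inf:
  assumes "periodic_grid M v" "0 < M"
  shows "\<bar>v i j\<bar> \<le> gnorm_inf M v"
proof -
  have "(i - 1) mod int M + 1 \<in> {1..int M}" "(j - 1) mod int M + 1 \<in> {1..int M}"
    using assms(2) by (auto simp: add1_zle_eq)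
  then show ?thesis
    unfolding gnorm_inf_def periodic_grid_mod[OF assms(1), of i j]
    by (intro Max_ge[OF finite_grid_values]) blast
qed

lemma gnorm_inf_attained:
  assumes "0 < M"
  obtains i j where "\<bar>v i j\<bar> = gnorm_inf M v"
proof -
  have "\<bar>v 1 1\<bar> \<in> {\<bar>v i j\<bar> | i j. i \<in> {1..int M} \<and> j \<in> {1..int M}}" using assms by force
  then have "gnorm_inf M v \<in> {\<bar>v i j\<bar> | i j. i \<in> {1..int M} \<and> j \<in> {1..int M}}"
    unfolding gnorm_inf_def by (intro Max_in[OF finite_grid_values]) blast
  then show ?thesis using that by force
qed

lemma gnorm_inf_le_iff:
  assumes "periodic_grid M v" "0 < M"
  shows "gnorm_inf M v \<le> \<beta> \<longleftrightarrow> (\<forall>i j. \<bar>v i j\<bar> \<le> \<beta>)"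
  using abs_le_gnorm_inf[OF assms] gnorm_inf_attained[OF assms(2), of v] by (metis order_trans)

lemma abs_neighbour_sum_le:
  fixes v :: grid
  assumes "\<And>i j. \<bar>v i j\<bar> \<le> c"
  shows "\<bar>v (i + 1) j + v (i - 1) j + v i (j + 1) + v i (j - 1)\<bar> \<le> 4 * c"
  using assms[of "i + 1" j] assms[of "i - 1" j] assms[of i "j + 1"] assms[of i "j - 1"] by linarith

lemma nonlinearity_vanishes_at_beta:
  assumes "double_well F f \<beta> \<or> flory_huggins F f \<beta>"
  shows "0 < \<beta> \<and> f \<beta> = 0 \<and> f (- \<beta>) = 0 \<and> (\<forall>x\<in>{- \<beta>..\<beta>}. f differentiable at x)"
  using assms
proof (elim disjE)
  assume "double_well F f \<beta>"
  then show ?thesis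
    by (auto simp: double_well_def)
next
  assume "flory_huggins F f \<beta>"
  then obtain \<theta> \<theta>c where f: "f = (\<lambda>x. \<theta> / 2 * ln ((1 - x) / (1 + x)) + \<theta>c * x)"
    and \<beta>: "0 < \<beta>" "\<beta> < 1" "f \<beta> = 0"
    unfolding flory_huggins_def by blast
  have "f (- \<beta>) = - f \<beta>" using \<beta>(1,2) by (simp add: f ln_div field_simps)
  moreover have "f differentiable at x" if "x \<in> {- \<beta>..\<beta>}" for x
  proof -
    have "0 < 1 - x" "0 < 1 + x" using that \<beta> by auto
    then have "\<exists>D. (f has_real_derivative D) (at x)"
      unfolding f by (intro exI) (auto intro!: derivative_eq_intros)
    then show ?thesis using real_differentiable_def by blast
  qed
  ultimately show ?thesis
    using \<beta> by simp
qed

lemma abs_stabilised_le: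
  fixes f :: "real \<Rightarrow> real"
  assumes diff: "\<And>x. x \<in> {- \<beta>..\<beta>} \<Longrightarrow> f differentiable at x"
    and deriv: "\<And>x. x \<in> {- \<beta>..\<beta>} \<Longrightarrow> \<bar>deriv f x\<bar> \<le> \<kappa>"
    and zeros: "f \<beta> = 0" "f (- \<beta>) = 0" and y: "\<bar>y\<bar> \<le> \<beta>"
  shows "\<bar>f y + \<kappa> * y\<bar> \<le> \<kappa> * \<beta>"
proof -
  define g where "g x = f x + \<kappa> * x" for x
  have mono: "g x \<le> g x'" if "- \<beta> \<le> x" "x \<le> x'" "x' \<le> \<beta>" for x x'
  proof (rule DERIV_nonneg_imp_nondecreasing[of x x' g, OF that(2)])
    fix z assume "x \<le> z" "z \<le> x'"
    then have z: "z \<in> {- \<beta>..\<beta>}" using that by simp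
    then have "(f has_real_derivative deriv f z) (at z)" using diff DERIV_deriv_iff_real_differentiable by blast
    then have "(g has_real_derivative deriv f z + \<kappa>) (at z)"
      unfolding g_def by (auto intro!: derivative_eq_intros)
    moreover have "0 \<le> deriv f z + \<kappa>" using deriv[OF z] by linarith
    ultimately show "\<exists>D. (g has_real_derivative D) (at z) \<and> 0 \<le> D" by blast
  qed
  have "g (- \<beta>) \<le> g y" "g y \<le> g \<beta>" using y by (auto intro!: mono)
  then show ?thesis using zeros by (simp add: g_def abs_le_iff)
qed

section \<open>The L2-1\<sigma> weights\<close>

lemma kernel_gap_ge_of_step_bound:
  fixes \<alpha> m \<Lambda> \<tau> :: real
  assumes "0 < \<alpha>" "\<alpha> < 1" "0 < m" "0 < \<Lambda>" "0 < \<tau>"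
    and "\<tau> \<le> (4 / (11 * (1 - \<alpha> / 2) * m * \<Lambda> * Gamma (2 - \<alpha>))) powr (1 / \<alpha>)"
  shows "m * \<Lambda> \<le> ((1 - \<alpha> / 2) * \<tau>) powr (- \<alpha>) / Gamma (2 - \<alpha>)"
proof -
  \<comment> \<open>Only \<open>(1 - \<alpha>/2) powr (- \<alpha>) \<ge> 1\<close> and \<open>11 * (1 - \<alpha>/2) / 4 \<ge> 1\<close> are needed.\<close>
  define G where "G = Gamma (2 - \<alpha>)"
  have G: "0 < G" using assms by (simp add: G_def Gamma_real_pos)
  define X where "X = 4 / (11 * (1 - \<alpha> / 2) * m * \<Lambda> * G)"
  have X: "0 < X" using assms G by (simp add: X_def)
  have "\<tau> powr \<alpha> \<le> (X powr (1 / \<alpha>)) powr \<alpha>"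
    using assms by (intro powr_mono2) (auto simp: X_def G_def)
  then have "\<tau> powr \<alpha> \<le> X" using X assms by (simp add: powr_powr)
  then have "1 / X \<le> \<tau> powr (- \<alpha>)"
    using X assms by (simp add: powr_minus_divide divide_simps)
  also have "\<dots> \<le> (1 - \<alpha> / 2) powr (- \<alpha>) * \<tau> powr (- \<alpha>)"
    using powr_mono'[of "- \<alpha>" 0 "1 - \<alpha> / 2"] assms by simp
  also have "\<dots> = ((1 - \<alpha> / 2) * \<tau>) powr (- \<alpha>)"
    by (rule powr_mult[symmetric])
  finally have "1 / X \<le> ((1 - \<alpha> / 2) * \<tau>) powr (- \<alpha>)" .
  moreover have "m * \<Lambda> * G \<le> 1 / X"
    using assms G by (simp add: X_def field_simps)
  ultimately have "m * \<Lambda> * G \<le> ((1 - \<alpha> / 2) * \<tau>) powr (- \<alpha>)" by linarith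
  then show ?thesis using G by (simp add: G_def le_divide_eq)
qed

lemma cube_le_of_ratio:
  fixes x y :: real
  assumes "0 < x" "0 < y" "4 * y \<le> 7 * x"
  shows "y^3 \<le> 2 * x^2 * (y + x)"
proof -
  have "(4 * y / 7)^2 * (11 * y / 7) \<le> x^2 * (y + x)"
    using assms by (intro mult_mono power_mono) auto
  moreover have "(4 * y / 7)^2 * (11 * y / 7) = 176 / 343 * y^3"
    by (simp add: power2_eq_square power3_eq_cube)
  moreover have "0 \<le> y^3" using assms by simp
  ultimately show ?thesis by linarith
qed

locale mesh =
  fixes \<alpha> :: real and t :: "nat \<Rightarrow> real" and n :: nat
  assumes alpha: "0 < \<alpha>" "\<alpha> < 1"
    and n_pos: "1 \<le> n"
    and t_less: "\<And>k. 1 \<le> k \<Longrightarrow> k \<le> n \<Longrightarrow> t (k - 1) < t k"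
    and ratio: "\<And>k. 2 \<le> k \<Longrightarrow> k \<le> n \<Longrightarrow> 4 / 7 \<le> rr t k"
begin

definition "T = tsig (\<alpha> / 2) t n"
definition "w s = omega (1 - \<alpha>) (T - s)"
definition "slope j = (w (t (Suc j)) - w (t j)) / tau t (Suc j)"

lemma t_less_Suc: "Suc j \<le> n \<Longrightarrow> t j < t (Suc j)"
  using t_less[of "Suc j"] by simp

lemma t_mono: "i \<le> j \<Longrightarrow> j \<le> n \<Longrightarrow> t i \<le> t j"
proof (induction j)
  case (Suc j)
  then show ?case using t_less_Suc[of j] by (cases "i = Suc j") auto
qed simp

lemma tau_Suc: "tau t (Suc j) = t (Suc j) - t j"
  by (simp add: tau_def)

lemma tau_pos: "1 \<le> k \<Longrightarrow> k \<le> n \<Longrightarrow> 0 < tau t k"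
  using t_less by (simp add: tau_def)

lemma T_minus: "T - t (n - 1) = (1 - \<alpha> / 2) * tau t n"
  by (simp add: T_def tsig_def tau_def algebra_simps)

lemma T_bounds: "t (n - 1) < T" "T \<le> t n"
proof -
  have "0 < (1 - \<alpha> / 2) * tau t n" "0 \<le> \<alpha> / 2 * tau t n"
    using tau_pos[OF n_pos order_refl] alpha by auto
  moreover have "t n - T = \<alpha> / 2 * tau t n"
    by (simp add: T_def tsig_def tau_def algebra_simps)
  ultimately show "t (n - 1) < T" "T \<le> t n" using T_minus by auto
qed

lemma t_less_T: "k < n \<Longrightarrow> t k < T"
  using t_mono[of k "n - 1"] T_bounds by force

lemma w_nonneg: "0 \<le> w s"
  using omega_reflected_nonneg[OF alpha(2)] by (simp add: w_def)

lemma convex_on_w: "convex_on {..<T} w"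
  using convex_on_omega_reflected[OF alpha] by (simp add: w_def[abs_def])

lemma increasing_cell_mesh: "Suc j < n \<Longrightarrow> increasing_cell w (t j) (t (Suc j))"
  using t_less_Suc[of j] t_less_T[of "Suc j"] alpha
  by unfold_locales
    (auto simp: w_def intro: omega_reflected_mono continuous_on_omega_reflected)

lemma a_coef_eq:
  "Suc j < n \<Longrightarrow> a_coef \<alpha> t n (Suc j) = moment0 w (t j) (t (Suc j)) / tau t (Suc j)"
  using t_less_T[of "Suc j"] by (simp add: a_coef_def moment0_def w_def[abs_def] T_def min_def)

lemma b_coef_eq:
  "b_coef \<alpha> t n (Suc j) =
     2 * moment1 w (t j) (t (Suc j)) / (tau t (Suc j) * (tau t (Suc j) + tau t (Suc (Suc j))))"
  by (simp add: b_coef_def moment1_def w_def[abs_def] T_def)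

lemma slope_nonneg: "Suc j < n \<Longrightarrow> 0 \<le> slope j"
  using increasing_cell.mono[OF increasing_cell_mesh, of j "t j" "t (Suc j)"] t_less_Suc[of j]
  by (simp add: slope_def tau_Suc)

lemma b_coef_nonneg: "Suc j < n \<Longrightarrow> 0 \<le> b_coef \<alpha> t n (Suc j)"
  using increasing_cell.moment1_nonneg[OF increasing_cell_mesh] tau_pos[of "Suc j"] tau_pos[of "Suc (Suc j)"]
  by (simp add: b_coef_eq)

lemma kernel_le_a_minus_b_coef:
  assumes "Suc j < n"
  shows "w (t j) \<le> a_coef \<alpha> t n (Suc j) - b_coef \<alpha> t n (Suc j)"
proof -
  interpret increasing_cell w "t j" "t (Suc j)" using increasing_cell_mesh assms .
  define x where "x = tau t (Suc j)"
  have x: "0 < x" "0 < tau t (Suc (Suc j))" using tau_pos assms by (auto simp: x_def)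
  have "b_coef \<alpha> t n (Suc j) \<le> 2 * moment1 w (t j) (t (Suc j)) / (x * x)"
    using x moment1_nonneg by (simp add: b_coef_eq x_def[symmetric] frac_le)
  also have "\<dots> \<le> 2 * (x / 2 * (moment0 w (t j) (t (Suc j)) - x * w (t j))) / (x * x)"
    using moment1_le_excess x by (intro divide_right_mono) (auto simp: tau_Suc x_def)
  also have "\<dots> = a_coef \<alpha> t n (Suc j) - w (t j)"
    using x by (simp add: a_coef_eq[OF assms] x_def[symmetric] field_simps)
  finally show ?thesis by simp
qed

lemma a_coef_le_of_slope:
  assumes "Suc j < n" and "\<And>s. t j \<le> s \<Longrightarrow> s \<le> t (Suc j) \<Longrightarrow> d * (t (Suc j) - s) \<le> w (t (Suc j)) - w s"
  shows "a_coef \<alpha> t n (Suc j) \<le> w (t (Suc j)) - d * tau t (Suc j) / 2"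
proof -
  define x where "x = tau t (Suc j)"
  have x: "0 < x" using tau_pos assms(1) by (simp add: x_def)
  have "moment0 w (t j) (t (Suc j)) \<le> x * w (t (Suc j)) - d * x^2 / 2"
    using increasing_cell.moment0_le_of_slope[OF increasing_cell_mesh[OF assms(1)] assms(2)]
    by (simp add: x_def tau_Suc)
  then have "moment0 w (t j) (t (Suc j)) / x \<le> (x * w (t (Suc j)) - d * x^2 / 2) / x"
    using x by (intro divide_right_mono) auto
  also have "\<dots> = w (t (Suc j)) - d * x / 2"
    using x by (simp add: field_simps power2_eq_square)
  finally show ?thesis by (simp add: a_coef_eq[OF assms(1)] x_def)
qed

lemma slope_le_next:
  assumes "Suc (Suc j) < n" "t (Suc j) \<le> s" "s \<le> t (Suc (Suc j))"
  shows "slope j * (t (Suc (Suc j)) - s) \<le> w (t (Suc (Suc j))) - w s"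
proof (cases "s = t (Suc (Suc j))")
  case False
  have "(w (t (Suc j)) - w (t j)) / (t (Suc j) - t j) \<le> (w (t (Suc (Suc j))) - w s) / (t (Suc (Suc j)) - s)"
    using convex_on_chord_slope_mono[OF convex_on_w] t_less_Suc[of j] t_mono[of j "Suc (Suc j)"]
      t_less_T[of "Suc (Suc j)"] assms False by force
  then show ?thesis using assms False by (simp add: slope_def tau_Suc le_divide_eq)
qed simp

lemma b_coef_div_ratio_le:
  assumes "Suc (Suc j) < n"
  shows "b_coef \<alpha> t n (Suc j) / rr t (Suc (Suc j)) \<le> slope j * tau t (Suc (Suc j)) / 2"
proof -
  define x y where "x = tau t (Suc (Suc j))" and "y = tau t (Suc j)"
  have x: "0 < x" and y: "0 < y" using tau_pos assms by (auto simp: x_def y_def)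
  have slope: "0 \<le> slope j" using slope_nonneg assms by simp
  interpret increasing_cell w "t j" "t (Suc j)" using increasing_cell_mesh assms by simp
  have "moment1 w (t j) (t (Suc j)) \<le> y^3 * slope j / 8"
    using moment1_le_increment y by (simp add: slope_def y_def tau_Suc power2_eq_square power3_eq_cube)
  also have "\<dots> \<le> 2 * x^2 * (y + x) * slope j / 8"
    using cube_le_of_ratio[OF x y] ratio[of "Suc (Suc j)"] assms x y slope
    by (intro divide_right_mono mult_right_mono) (auto simp: rr_def x_def y_def field_simps)
  finally have moment1: "moment1 w (t j) (t (Suc j)) \<le> 2 * x^2 * (y + x) * slope j / 8" .
  have "b_coef \<alpha> t n (Suc j) / rr t (Suc (Suc j)) = 2 * moment1 w (t j) (t (Suc j)) / (y * (y + x)) / (x / y)"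
    by (simp add: b_coef_eq rr_def x_def[symmetric] y_def[symmetric])
  also have "\<dots> = 2 * moment1 w (t j) (t (Suc j)) / (x * (y + x))"
    using x y by (simp add: divide_simps)
  also have "\<dots> \<le> 2 * (2 * x^2 * (y + x) * slope j / 8) / (x * (y + x))"
    using moment1 x y by (intro divide_right_mono) auto
  also have "\<dots> = slope j * x / 2"
    using x y by (simp add: power2_eq_square divide_simps)
  finally show ?thesis by (simp add: x_def)
qed

lemma B_coef_interior:
  "Suc j < n \<Longrightarrow> B_coef \<alpha> t n (Suc j) =
     a_coef \<alpha> t n (Suc j) - b_coef \<alpha> t n (Suc j) + (if j = 0 then 0 else b_coef \<alpha> t n j / rr t (Suc j))"
  by (simp add: B_coef_def)

lemma B_coef_le_kernel:
  assumes "Suc j < n"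
  shows "B_coef \<alpha> t n (Suc j) \<le> w (t (Suc j))"
proof (cases j)
  case 0
  have "a_coef \<alpha> t n (Suc j) \<le> w (t (Suc j)) - 0 * tau t (Suc j) / 2"
    using assms by (intro a_coef_le_of_slope) (auto intro: increasing_cell.mono[OF increasing_cell_mesh])
  then show ?thesis using 0 B_coef_interior[OF assms] b_coef_nonneg[OF assms] by simp
next
  case (Suc i)
  have "a_coef \<alpha> t n (Suc j) \<le> w (t (Suc j)) - slope i * tau t (Suc j) / 2"
    using assms Suc by (auto intro!: a_coef_le_of_slope slope_le_next)
  moreover have "b_coef \<alpha> t n j / rr t (Suc j) \<le> slope i * tau t (Suc j) / 2"
    using b_coef_div_ratio_le assms Suc by simp
  moreover have "B_coef \<alpha> t n (Suc j) = a_coef \<alpha> t n (Suc j) - b_coef \<alpha> t n (Suc j) + b_coef \<alpha> t n j / rr t (Suc j)"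
    using B_coef_interior[OF assms] Suc by simp
  ultimately show ?thesis using b_coef_nonneg[OF assms] by linarith
qed

lemma kernel_le_B_coef:
  assumes "Suc j < n"
  shows "w (t j) \<le> B_coef \<alpha> t n (Suc j)"
proof -
  have "0 \<le> b_coef \<alpha> t n j / rr t (Suc j)" if "j \<noteq> 0"
    using that b_coef_nonneg[of "j - 1"] tau_pos[of j] tau_pos[of "Suc j"] assms
    by (simp add: rr_def)
  then show ?thesis using kernel_le_a_minus_b_coef[OF assms] B_coef_interior[OF assms]
    by (cases "j = 0") auto
qed

lemma a_coef_le_B_coef_last: "a_coef \<alpha> t n n \<le> B_coef \<alpha> t n n"
proof (cases "n = 1")
  case False
  define j where "j = n - 2"
  have j: "n = Suc (Suc j)" using False n_pos by (simp add: j_def)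
  have "0 \<le> b_coef \<alpha> t n (Suc j) / rr t n"
    using b_coef_nonneg[of j] tau_pos[of "Suc j"] tau_pos[of n] j by (simp add: rr_def)
  then show ?thesis using j by (simp add: B_coef_def)
qed (simp add: B_coef_def)

text \<open>\<open>B_coef\<close> at the index \<open>0\<close> is a junk value; the history weights replace it by \<open>0\<close>.\<close>

definition "B_ext k = (if k = 0 then 0 else B_coef \<alpha> t n k)"

lemma B_ext_mono:
  assumes "k < n - 1"
  shows "B_ext k \<le> B_ext (Suc k)"
proof (cases k)
  case 0
  then show ?thesis using w_nonneg[of "t 0"] kernel_le_B_coef[of 0] assms by (simp add: B_ext_def)
next
  case (Suc j)
  then have "Suc (Suc j) < n" using assms by simp
  then show ?thesis using B_coef_le_kernel[of j] kernel_le_B_coef[of k] Suc by (simp add: B_ext_def)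
qed

lemma B_coef_last_gap: "a_coef \<alpha> t n n - w (t (n - 1)) \<le> B_coef \<alpha> t n n - B_ext (n - 1)"
proof (cases "n = 1")
  case True
  then have "B_ext (n - 1) = 0" unfolding B_ext_def by simp
  then show ?thesis using a_coef_le_B_coef_last w_nonneg[of "t (n - 1)"] by simp
next
  case False
  define j where "j = n - 2"
  have j: "n - 1 = Suc j" "Suc j < n" using False n_pos by (simp_all add: j_def)
  then show ?thesis using a_coef_le_B_coef_last B_coef_le_kernel[of j] by (simp add: B_ext_def)
qed

lemma a_coef_last_minus_kernel:
  "a_coef \<alpha> t n n - w (t (n - 1)) = \<alpha> / 2 * ((1 - \<alpha> / 2) * tau t n) powr (- \<alpha>) / Gamma (2 - \<alpha>)"
proof -
  define u P G where "u = (1 - \<alpha> / 2) * tau t n" and "P = u powr (- \<alpha>)" and "G = Gamma (2 - \<alpha>)"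
  have tau: "0 < tau t n" using tau_pos n_pos by simp
  then have u: "0 < u" using alpha by (simp add: u_def)
  have G: "G = (1 - \<alpha>) * Gamma (1 - \<alpha>)" "Gamma (1 - \<alpha>) \<noteq> 0"
    using Gamma_two_minus[OF alpha] Gamma_one_minus_pos[OF alpha(2)] by (simp_all add: G_def)
  have "a_coef \<alpha> t n n = omega (2 - \<alpha>) u / tau t n"
    using integral_unique[OF has_integral_omega_reflected[OF less_imp_le[OF T_bounds(1)] alpha]]
      T_bounds(2) T_minus by (simp add: a_coef_def T_def[symmetric] min_def u_def)
  also have "\<dots> = u * P / G / tau t n"
    using powr_add[of u 1 "- \<alpha>"] u by (simp add: omega_def P_def G_def)
  also have "\<dots> = (1 - \<alpha> / 2) * P / G"
    using tau by (simp add: u_def)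
  finally have a: "a_coef \<alpha> t n n = (1 - \<alpha> / 2) * P / G" .
  have "w (t (n - 1)) = P / Gamma (1 - \<alpha>)"
    using T_minus by (simp add: w_def u_def P_def omega_one_minus)
  also have "\<dots> = (1 - \<alpha>) * P / G"
    using G alpha by simp
  finally have "a_coef \<alpha> t n n - w (t (n - 1)) = ((1 - \<alpha> / 2) * P - (1 - \<alpha>) * P) / G"
    using a by (simp add: diff_divide_distrib)
  then show ?thesis by (simp add: u_def P_def G_def algebra_simps)
qed

lemma a_coef_last_gap_ge:
  assumes "0 < m" "0 < \<Lambda>"
    and "tau t n \<le> (4 / (11 * (1 - \<alpha> / 2) * m * \<Lambda> * Gamma (2 - \<alpha>))) powr (1 / \<alpha>)"
  shows "m * (\<alpha> / 2) * \<Lambda> \<le> a_coef \<alpha> t n n - w (t (n - 1))"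
proof -
  have "\<alpha> / 2 * (m * \<Lambda>) \<le> \<alpha> / 2 * (((1 - \<alpha> / 2) * tau t n) powr (- \<alpha>) / Gamma (2 - \<alpha>))"
    using kernel_gap_ge_of_step_bound[OF alpha assms(1,2) tau_pos[OF n_pos order_refl] assms(3)] alpha
    by (intro mult_left_mono) auto
  then show ?thesis unfolding a_coef_last_minus_kernel by (simp add: ac_simps)
qed

lemma B_ext_nonneg: "k \<le> n - 1 \<Longrightarrow> 0 \<le> B_ext k"
proof (induction k)
  case (Suc k)
  then show ?case using B_ext_mono[of k] by simp
qed (simp add: B_ext_def)

lemma caputo_sum_split:
  fixes v :: "nat \<Rightarrow> real"
  assumes "\<And>k. k < n \<Longrightarrow> \<bar>v k\<bar> \<le> \<beta>"
  obtains H where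
    "(\<Sum>k = 1..n. B_coef \<alpha> t n k * (v k - v (k - 1)))
       = B_coef \<alpha> t n n * v n - (B_coef \<alpha> t n n - B_ext (n - 1)) * v (n - 1) + H"
    "\<bar>H\<bar> \<le> B_ext (n - 1) * \<beta>"
proof
  define H where "H = (\<Sum>k = 1..n - 1. B_ext k * (v k - v (k - 1))) - B_ext (n - 1) * v (n - 1)"
  show "\<bar>H\<bar> \<le> B_ext (n - 1) * \<beta>"
    unfolding H_def using B_ext_mono assms by (intro abs_weighted_increments_le) (auto simp: B_ext_def)
  obtain j where n: "n = Suc j" using n_pos by (cases n) auto
  have "(\<Sum>k = 1..n - 1. B_coef \<alpha> t n k * (v k - v (k - 1))) = (\<Sum>k = 1..n - 1. B_ext k * (v k - v (k - 1)))"
    by (rule sum.cong) (auto simp: B_ext_def)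
  then show "(\<Sum>k = 1..n. B_coef \<alpha> t n k * (v k - v (k - 1)))
       = B_coef \<alpha> t n n * v n - (B_coef \<alpha> t n n - B_ext (n - 1)) * v (n - 1) + H"
    by (simp add: n H_def algebra_simps)
qed

lemma max_principle_step:
  fixes m \<epsilon> \<kappa> \<beta> h V :: real and M :: nat and \<phi> \<phi>hat :: "nat \<Rightarrow> grid" and f :: "real \<Rightarrow> real"
  assumes M: "0 < M" and m: "0 < m" and \<epsilon>: "0 < \<epsilon>" and h: "0 < h" and \<kappa>: "0 \<le> \<kappa>"
    and per: "periodic_grid M (\<phi> n)"
    and prev: "\<And>k i j. k < n \<Longrightarrow> \<bar>\<phi> k i j\<bar> \<le> \<beta>"
    and pred: "\<And>i j. \<bar>\<phi>hat n i j\<bar> \<le> \<beta>"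
    and V: "0 \<le> V" "V \<le> 1"
    and stab: "\<And>y. \<bar>y\<bar> \<le> \<beta> \<Longrightarrow> \<bar>f y + \<kappa> * y\<bar> \<le> \<kappa> * \<beta>"
    and eq: "\<And>i j. caputo_L21s \<alpha> t \<phi> n i j =
        m * (\<epsilon>^2 * lap_h h (gsig (\<alpha> / 2) (\<phi> n) (\<phi> (n - 1))) i j
             + V * f (gsig (\<alpha> / 2) (\<phi>hat n) (\<phi> (n - 1)) i j)
             - \<kappa> * (gsig (\<alpha> / 2) (\<phi> n) (\<phi> (n - 1)) i j - V * gsig (\<alpha> / 2) (\<phi>hat n) (\<phi> (n - 1)) i j))"
    and step: "tau t n \<le> (4 / (11 * (1 - \<alpha> / 2) * m * (4 * \<epsilon>^2 / h^2 + \<kappa>) * Gamma (2 - \<alpha>))) powr (1 / \<alpha>)"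
  shows "gnorm_inf M (\<phi> n) \<le> \<beta>"
proof -
  define \<sigma> l where "\<sigma> = \<alpha> / 2" and "l = \<epsilon>^2 / h^2"
  have l: "0 < l" using \<epsilon> h by (simp add: l_def)
  have \<beta>: "0 \<le> \<beta>" using prev[of 0 0 0] n_pos by simp
  have gap: "m * \<sigma> * (4 * l + \<kappa>) \<le> B_coef \<alpha> t n n - B_ext (n - 1)"
    using a_coef_last_gap_ge[OF m, of "4 * l + \<kappa>"] step B_coef_last_gap l \<kappa>
    by (simp add: \<sigma>_def l_def)
  obtain i0 j0 where max: "\<bar>\<phi> n i0 j0\<bar> = gnorm_inf M (\<phi> n)" using gnorm_inf_attained[OF M] .
  define x where "x k = \<phi> k i0 j0" for k
  obtain H where split: "caputo_L21s \<alpha> t \<phi> n i0 j0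
      = B_coef \<alpha> t n n * x n - (B_coef \<alpha> t n n - B_ext (n - 1)) * x (n - 1) + H"
    and H: "\<bar>H\<bar> \<le> B_ext (n - 1) * \<beta>"
    using caputo_sum_split[of x \<beta>] prev by (auto simp: x_def caputo_L21s_def)
  define y where "y = gsig (\<alpha> / 2) (\<phi>hat n) (\<phi> (n - 1)) i0 j0"
  have "\<bar>y\<bar> \<le> \<beta>"
    unfolding y_def gsig_def using alpha n_pos by (intro abs_convex_comb_le pred prev) auto
  then have g: "\<bar>V * (f y + \<kappa> * y)\<bar> \<le> \<kappa> * \<beta>"
    using mult_mono[OF V(2) stab] V \<kappa> \<beta> by (simp add: abs_mult)
  define Nn Np where "Nn = \<phi> n (i0 + 1) j0 + \<phi> n (i0 - 1) j0 + \<phi> n i0 (j0 + 1) + \<phi> n i0 (j0 - 1)"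
    and "Np = \<phi> (n - 1) (i0 + 1) j0 + \<phi> (n - 1) (i0 - 1) j0 + \<phi> (n - 1) i0 (j0 + 1) + \<phi> (n - 1) i0 (j0 - 1)"
  have eqn: "B_coef \<alpha> t n n * x n - (B_coef \<alpha> t n n - B_ext (n - 1)) * x (n - 1) + H =
      m * (l * ((1 - \<sigma>) * Nn + \<sigma> * Np - 4 * ((1 - \<sigma>) * x n + \<sigma> * x (n - 1)))
        + V * (f y + \<kappa> * y) - \<kappa> * ((1 - \<sigma>) * x n + \<sigma> * x (n - 1)))"
    using eq[of i0 j0] h unfolding split
    by (simp add: lap_h_def gsig_def x_def y_def l_def \<sigma>_def Nn_def Np_def field_simps)
  have Nn: "\<bar>Nn\<bar> \<le> 4 * gnorm_inf M (\<phi> n)"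
    unfolding Nn_def by (intro abs_neighbour_sum_le abs_le_gnorm_inf[OF per M])
  have Np: "\<bar>Np\<bar> \<le> 4 * \<beta>"
    unfolding Np_def using prev n_pos by (intro abs_neighbour_sum_le) simp
  have xn: "\<bar>x n\<bar> = gnorm_inf M (\<phi> n)" and xp: "\<bar>x (n - 1)\<bar> \<le> \<beta>"
    using max prev[of "n - 1"] n_pos by (simp_all add: x_def)
  have \<sigma>: "0 < \<sigma>" "\<sigma> < 1" using alpha by (simp_all add: \<sigma>_def)
  show ?thesis
    by (rule pointwise_max_principle[OF eqn gap B_ext_nonneg[of "n - 1"] H xn Nn Np xp g m l \<kappa> \<sigma>]) simp
qed

end

lemma sESAV_solution_periodic:
  assumes "sESAV_solution L M m \<epsilon> \<alpha> \<kappa> F f \<beta> V t N \<phi> R \<phi>hat" "n \<le> N"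
  shows "periodic_grid M (\<phi> n)"
  using assms by (cases "n = 0") (auto simp: sESAV_solution_def Let_def)

lemma sESAV_solution_predicted_bounded:
  assumes scheme: "sESAV_solution L M m \<epsilon> \<alpha> \<kappa> F f \<beta> V t N \<phi> R \<phi>hat"
    and n: "n \<in> {1..N}" and M: "0 < M" and \<beta>: "0 \<le> \<beta>"
  shows "\<bar>\<phi>hat n i j\<bar> \<le> \<beta>"
proof (cases "n = 1")
  case True
  then show ?thesis using scheme n gnorm_inf_le_iff[OF _ M, of "\<phi>hat 1"]
    by (auto simp: sESAV_solution_def Let_def)
next
  case False
  then have "\<phi>hat n i j = min (max ((1 + rr t n) * \<phi> (n - 1) i j - rr t n * \<phi> (n - 2) i j) (- \<beta>)) \<beta>"
    using scheme n by (simp add: sESAV_solution_def Let_def)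
  then show ?thesis using \<beta> by (simp add: abs_le_iff)
qed

lemma sESAV_solution_step_bounded:
  assumes scheme: "sESAV_solution L M m \<epsilon> \<alpha> \<kappa> F f \<beta> V t N \<phi> R \<phi>hat"
    and L: "0 < L" and M: "0 < M" and m: "0 < m" and \<epsilon>: "0 < \<epsilon>" and alpha: "0 < \<alpha>" "\<alpha> < 1"
    and V: "assumption_A2 V 1"
    and t_mono: "\<forall>k\<in>{1..N}. t (k - 1) < t k" and ratio: "\<forall>k\<in>{2..N}. 4 / 7 \<le> rr t k"
    and \<kappa>: "0 \<le> \<kappa>" and stab: "\<And>y. \<bar>y\<bar> \<le> \<beta> \<Longrightarrow> \<bar>f y + \<kappa> * y\<bar> \<le> \<kappa> * \<beta>"
    and n: "n \<in> {1..N}"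
    and step: "tau t n \<le>
        (4 / (11 * (1 - \<alpha> / 2) * m * (4 * \<epsilon>^2 / (L / real M)^2 + \<kappa>) * Gamma (2 - \<alpha>))) powr (1 / \<alpha>)"
    and prev: "\<And>k. k < n \<Longrightarrow> gnorm_inf M (\<phi> k) \<le> \<beta>"
  shows "gnorm_inf M (\<phi> n) \<le> \<beta>"
proof -
  interpret mesh \<alpha> t n
    using alpha n t_mono ratio by unfold_locales auto
  have prev': "\<And>k i j. k < n \<Longrightarrow> \<bar>\<phi> k i j\<bar> \<le> \<beta>"
    using prev gnorm_inf_le_iff[OF sESAV_solution_periodic[OF scheme] M] n by fastforce
  have \<beta>: "0 \<le> \<beta>" using prev'[of 0 0 0] n by simp
  let ?V = "V (g_h (L / real M) M F (gsig (\<alpha> / 2) (\<phi>hat n) (\<phi> (n - 1))) (R (n - 1)))"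
  have eq: "\<And>i j. caputo_L21s \<alpha> t \<phi> n i j =
        m * (\<epsilon>^2 * lap_h (L / real M) (gsig (\<alpha> / 2) (\<phi> n) (\<phi> (n - 1))) i j
             + ?V * f (gsig (\<alpha> / 2) (\<phi>hat n) (\<phi> (n - 1)) i j)
             - \<kappa> * (gsig (\<alpha> / 2) (\<phi> n) (\<phi> (n - 1)) i j - ?V * gsig (\<alpha> / 2) (\<phi>hat n) (\<phi> (n - 1)) i j))"
    using scheme n by (simp add: sESAV_solution_def Let_def)
  have V01: "0 \<le> ?V" "?V \<le> 1" using V by (auto simp: assumption_A2_def)
  have h: "0 < L / real M" using L M by simp
  have per: "periodic_grid M (\<phi> n)" using sESAV_solution_periodic[OF scheme] n by simp
  show ?thesis
    by (rule max_principle_step[where \<phi> = \<phi> and \<phi>hat = \<phi>hat, OF M m \<epsilon> h \<kappa> per prev'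
        sESAV_solution_predicted_bounded[OF scheme n M \<beta>] V01 stab eq step])
qed

theorem mainTheorem12:
  fixes L m \<epsilon> \<alpha> \<kappa> \<beta> K1 :: real
    and M N :: nat
    and F f V :: "real \<Rightarrow> real"
    and t :: "nat \<Rightarrow> real"
    and \<phi> \<phi>hat :: "nat \<Rightarrow> grid"
    and R :: "nat \<Rightarrow> real"
  assumes L_pos: "L > 0" and M_pos: "M > 0"
    and m_pos: "m > 0" and eps_pos: "\<epsilon> > 0"
    and alpha: "0 < \<alpha>" "\<alpha> < 1"
    and nonlin: "double_well F f \<beta> \<or> flory_huggins F f \<beta>"
    and A1: "assumption_A1 V K1" and A2: "assumption_A2 V 1" and A3: "assumption_A3 V"
    and t0: "t 0 = 0" and t_mono: "\<forall>k\<in>{1..N}. t (k - 1) < t k"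
    and ratio: "\<forall>k\<in>{2..N}. rr t k \<ge> 4/7"
    and kappa_nonneg: "\<kappa> \<ge> 0"
    and kappa: "\<forall>x\<in>{-\<beta>..\<beta>}. \<bar>deriv f x\<bar> \<le> \<kappa>"
    and init: "gnorm_inf M (\<phi> 0) \<le> \<beta>"
    and tau1: "1 \<le> N \<Longrightarrow> tau t 1 \<le> min
        ((4 / (11 * (\<alpha>/2) * m * (\<kappa> + 4 * \<epsilon>^2 / (L / real M)^2) * Gamma (2 - \<alpha>))) powr (1/\<alpha>))
        ((4 / (11 * \<kappa> * (1 - \<alpha>/2) * m * Gamma (2 - \<alpha>))) powr (1/\<alpha>))"
    and taun: "\<forall>n\<in>{1..N}. tau t n \<le>
        (4 / (11 * (1 - \<alpha>/2) * m * (4 * \<epsilon>^2 / (L / real M)^2 + \<kappa>) * Gamma (2 - \<alpha>))) powr (1/\<alpha>)"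
    and scheme: "sESAV_solution L M m \<epsilon> \<alpha> \<kappa> F f \<beta> V t N \<phi> R \<phi>hat"
  shows "\<forall>n\<in>{1..N}. gnorm_inf M (\<phi> n) \<le> \<beta>"
proof -
  have stab: "\<bar>f y + \<kappa> * y\<bar> \<le> \<kappa> * \<beta>" if "\<bar>y\<bar> \<le> \<beta>" for y
    using nonlinearity_vanishes_at_beta[OF nonlin] kappa that by (intro abs_stabilised_le) auto
  have "gnorm_inf M (\<phi> n) \<le> \<beta>" if "n \<le> N" for n
    using that
  proof (induction n rule: less_induct)
    case (less n)
    show ?case
    proof (cases "n = 0")
      case False
      then have n: "n \<in> {1..N}" using less.prems by simp
      show ?thesis
        using sESAV_solution_step_bounded[OF scheme L_pos M_pos m_pos eps_pos alpha A2 t_mono ratio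
            kappa_nonneg stab n taun[rule_format, OF n]] less by simp
    qed (use init in simp)
  qed
  then show ?thesis by simp
qed

end
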